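(* Let $S^+=\{\overline{\jmath}_1,\dots,\overline{\jmath}_\nu\}$ be a set of distinct positive integers, $S=S^+\cup(-S^+)$, $S^c=\mathbb{Z}\setminus(S\cup\{0\})$, $\lambda(j)=j\frac{4+j^2}{1+j^2}$ and $\overline\omega=(\lambda(\overline{\jmath}_1),\dots,\lambda(\overline{\jmath}_\nu))$. There exists a constant $C>0$ depending on the set $S$ such that the following holds: if $j,j'\in S^c$, $j\ne j'$, $\ell\in\mathbb{Z}^\nu$ with $0<|\ell|\le2$ (where $|\ell|=\sum_i|\ell_i|$), $\sum_{i=1}^\nu\overline{\jmath}_i\ell_i+j-j'=0$ and $\delta_{\ell jj'}:=\overline\omega\cdot\ell+\lambda(j)-\lambda(j')\ne0$, then $|\delta_{\ell jj'}|\ge C$. *)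

theory Defs
  imports Complex_Main
begin

definition lam :: "int \<Rightarrow> real" where
  "lam j = real_of_int j * (4 + (real_of_int j)^2) / (1 + (real_of_int j)^2)"

definition tangS :: "nat \<Rightarrow> (nat \<Rightarrow> int) \<Rightarrow> int set" where
  "tangS \<nu> jbar = jbar ` {..<\<nu>} \<union> uminus ` jbar ` {..<\<nu>}"

definition normS :: "nat \<Rightarrow> (nat \<Rightarrow> int) \<Rightarrow> int set" where
  "normS \<nu> jbar = UNIV - (tangS \<nu> jbar \<union> {0})"

definition delta :: "nat \<Rightarrow> (nat \<Rightarrow> int) \<Rightarrow> (nat \<Rightarrow> int) \<Rightarrow> int \<Rightarrow> int \<Rightarrow> real" where
  "delta \<nu> jbar l j j' = (\<Sum>i<\<nu>. lam (jbar i) * real_of_int (l i)) + lam j - lam j'"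

end

theory Submission
  imports Defs "HOL-Library.FuncSet"
begin

(* Write lam j = j + lam_corr j with lam_corr j = 3 j / (1 + j^2). Under the momentum condition
   the integer parts cancel and delta = (\<Sum>i. lam_corr (jbar i) * l i) + lam_corr j - lam_corr j'.
   Since lam_corr is positive and injective on the positive integers, the sum is nonzero for
   0 < |l| \<le> 2, and as it takes finitely many values it is at least some alpha > 0 in modulus.
   As lam_corr j \<rightarrow> 0 and |j - j'| is bounded by the momentum condition, |delta| \<ge> alpha / 2 once |j|
   or |j'| is large; the remaining triples (l, j, j') produce only finitely many values of delta. *)

definition lam_corr :: "int \<Rightarrow> real" where
  "lam_corr j = 3 * real_of_int j / (1 + (real_of_int j)^2)"

lemma lam_eq_plus_lam_corr: "lam j = real_of_int j + lam_corr j"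
proof -
  have "1 + (real_of_int j)^2 > 0"
    by (simp add: add_pos_nonneg)
  then show ?thesis
    unfolding lam_def lam_corr_def by (simp add: field_simps power2_eq_square)
qed

lemma lam_corr_pos: "j > 0 \<Longrightarrow> lam_corr j > 0"
  unfolding lam_corr_def by (simp add: add_pos_nonneg)

lemma inj_on_lam_corr: "inj_on lam_corr {0<..}"
proof (rule inj_onI)
  fix x y :: int
  assume pos: "x \<in> {0<..}" "y \<in> {0<..}" and eq: "lam_corr x = lam_corr y"
  have "1 + (real_of_int x)^2 > 0" "1 + (real_of_int y)^2 > 0"
    by (simp_all add: add_pos_nonneg)
  with eq have "(real_of_int x - real_of_int y) * (1 - real_of_int x * real_of_int y) = 0"
    unfolding lam_corr_def by (simp add: field_simps power2_eq_square)
  then have "x = y \<or> x * y = 1"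
    by (metis eq_iff_diff_eq_0 mult_eq_0_iff of_int_eq_iff of_int_mult of_int_1)
  with pos show "x = y"
    by (auto simp: pos_zmult_eq_1_iff)
qed

lemma abs_lam_corr_le: "\<bar>lam_corr j\<bar> \<le> 3 / \<bar>real_of_int j\<bar>"
proof (cases "j = 0")
  case False
  have "1 + (real_of_int j)^2 > 0"
    by (simp add: add_pos_nonneg)
  with False show ?thesis
    unfolding lam_corr_def by (simp add: abs_mult divide_simps power2_eq_square)
qed (simp add: lam_corr_def)

lemma lam_corr_eventually_small:
  assumes "\<epsilon> > 0"
  obtains R :: int where "\<And>j. R \<le> \<bar>j\<bar> \<Longrightarrow> \<bar>lam_corr j\<bar> \<le> \<epsilon>"
proof
  fix j :: int
  assume "max 1 \<lceil>3 / \<epsilon>\<rceil> \<le> \<bar>j\<bar>"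
  then have j: "3 / \<epsilon> \<le> \<bar>real_of_int j\<bar>" "0 < \<bar>real_of_int j\<bar>"
    by linarith+
  have "\<bar>lam_corr j\<bar> \<le> 3 / \<bar>real_of_int j\<bar>"
    by (rule abs_lam_corr_le)
  also have "\<dots> \<le> \<epsilon>"
    using j assms by (simp add: divide_simps mult.commute)
  finally show "\<bar>lam_corr j\<bar> \<le> \<epsilon>" .
qed

lemma delta_eq_lam_corr:
  assumes "(\<Sum>i<\<nu>. jbar i * l i) + j - j' = 0"
  shows "delta \<nu> jbar l j j'
           = (\<Sum>i<\<nu>. lam_corr (jbar i) * real_of_int (l i)) + lam_corr j - lam_corr j'"
proof -
  have "(\<Sum>i<\<nu>. real_of_int (jbar i) * real_of_int (l i)) + real_of_int j - real_of_int j' = 0"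
    using arg_cong[OF assms, of real_of_int] by simp
  then show ?thesis
    unfolding delta_def lam_eq_plus_lam_corr by (simp add: algebra_simps sum.distrib)
qed

lemma weighted_sum_nonzero:
  fixes w :: "'i \<Rightarrow> 'a::linordered_idom" and l :: "'i \<Rightarrow> int"
  assumes "finite I" and "inj_on w I" and w_pos: "\<And>i. i \<in> I \<Longrightarrow> w i > 0"
    and "0 < (\<Sum>i\<in>I. \<bar>l i\<bar>)" and "(\<Sum>i\<in>I. \<bar>l i\<bar>) \<le> 2"
  shows "(\<Sum>i\<in>I. w i * of_int (l i)) \<noteq> 0"
proof -
  have sum_pos: "0 < (\<Sum>i\<in>I. w i * of_int (k i))"
    if "\<And>i. i \<in> I \<Longrightarrow> 0 \<le> k i" and "0 < (\<Sum>i\<in>I. \<bar>k i\<bar>)" for k :: "'i \<Rightarrow> int"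
  proof -
    obtain i where "i \<in> I" "k i \<noteq> 0"
      using \<open>0 < (\<Sum>i\<in>I. \<bar>k i\<bar>)\<close> by (metis abs_zero less_irrefl sum.neutral)
    with that(1) have "0 < k i"
      by force
    with that(1) w_pos \<open>i \<in> I\<close> show ?thesis
      by (intro sum_pos2[OF \<open>finite I\<close> \<open>i \<in> I\<close>]) (auto intro!: mult_pos_pos mult_nonneg_nonneg simp: less_imp_le)
  qed
  consider "\<And>i. i \<in> I \<Longrightarrow> 0 \<le> l i" | "\<And>i. i \<in> I \<Longrightarrow> l i \<le> 0"
    | p n where "p \<in> I" "n \<in> I" "l p > 0" "l n < 0"
    by (meson linorder_not_le)
  then show ?thesis
  proof cases
    case 1
    then show ?thesis
      using sum_pos[OF 1 assms(4)] by simp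
  next
    case 2
    have "0 < (\<Sum>i\<in>I. w i * of_int (- l i))"
      using assms(4) by (intro sum_pos) (simp_all add: 2)
    then show ?thesis
      by (simp add: sum_negf)
  next
    case (3 p n)
    have pn: "{p, n} \<subseteq> I" "p \<noteq> n"
      using 3 by auto
    have split: "sum f I = sum f (I - {p, n}) + f p + f n" for f :: "'i \<Rightarrow> 'b::comm_monoid_add"
      using sum.subset_diff[OF pn(1) \<open>finite I\<close>, of f] pn(2) by (simp add: add.assoc)
    have "(\<Sum>i\<in>I - {p, n}. \<bar>l i\<bar>) + l p - l n \<le> 2"
      using split[of "\<lambda>i. \<bar>l i\<bar>"] 3 assms(5) by simp
    moreover have "(\<Sum>i\<in>I - {p, n}. \<bar>l i\<bar>) \<ge> 0"
      by (simp add: sum_nonneg)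
    ultimately have "(\<Sum>i\<in>I - {p, n}. \<bar>l i\<bar>) = 0" "l p = 1" "l n = -1"
      using 3 by linarith+
    then have "(\<Sum>i\<in>I. w i * of_int (l i)) = w p - w n"
      using split[of "\<lambda>i. w i * of_int (l i)"] \<open>finite I\<close> by (simp add: sum_nonneg_eq_0_iff)
    then show ?thesis
      using 3 pn \<open>inj_on w I\<close> by (auto dest: inj_onD)
  qed
qed

lemma abs_sum_mult_le:
  fixes a l :: "'i \<Rightarrow> 'a::linordered_idom"
  assumes "finite I"
  shows "\<bar>\<Sum>i\<in>I. a i * l i\<bar> \<le> (\<Sum>i\<in>I. \<bar>a i\<bar>) * (\<Sum>i\<in>I. \<bar>l i\<bar>)"
proof -
  have "\<bar>\<Sum>i\<in>I. a i * l i\<bar> \<le> (\<Sum>i\<in>I. \<bar>a i\<bar> * \<bar>l i\<bar>)"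
    using sum_abs[of "\<lambda>i. a i * l i" I] by (simp add: abs_mult)
  also have "\<dots> \<le> (\<Sum>i\<in>I. \<bar>a i\<bar> * (\<Sum>k\<in>I. \<bar>l k\<bar>))"
    using assms by (intro sum_mono mult_left_mono member_le_sum) auto
  finally show ?thesis
    by (simp add: sum_distrib_right)
qed

lemma finite_image_l1_bounded:
  fixes F :: "('i \<Rightarrow> int) \<Rightarrow> 'b"
  assumes "finite I" and F: "\<And>l l'. (\<And>i. i \<in> I \<Longrightarrow> l i = l' i) \<Longrightarrow> F l = F l'"
  shows "finite {F l | l. (\<Sum>i\<in>I. \<bar>l i\<bar>) \<le> b}"
proof (rule finite_subset)
  show "{F l | l. (\<Sum>i\<in>I. \<bar>l i\<bar>) \<le> b} \<subseteq> F ` (PiE I (\<lambda>_. {-b..b}))"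
  proof clarify
    fix l :: "'i \<Rightarrow> int"
    assume b: "(\<Sum>i\<in>I. \<bar>l i\<bar>) \<le> b"
    have "\<bar>l i\<bar> \<le> b" if "i \<in> I" for i
      using member_le_sum[OF that, of "\<lambda>i. \<bar>l i\<bar>"] \<open>finite I\<close> b by simp
    then have "restrict l I \<in> PiE I (\<lambda>_. {-b..b})"
      by (auto simp: abs_le_iff minus_le_iff)
    moreover have "F l = F (restrict l I)"
      by (rule F) simp
    ultimately show "F l \<in> F ` (PiE I (\<lambda>_. {-b..b}))"
      by blast
  qed
qed (simp add: \<open>finite I\<close> finite_PiE)

lemma finite_nonzero_abs_lower_bound:
  fixes X :: "'a::linordered_idom set"
  assumes "finite X"
  obtains c where "c > 0" and "\<And>x. x \<in> X \<Longrightarrow> x \<noteq> 0 \<Longrightarrow> c \<le> \<bar>x\<bar>"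
proof
  show "Min (insert 1 (abs ` (X - {0}))) > 0"
    using assms by (subst Min_gr_iff) auto
  show "Min (insert 1 (abs ` (X - {0}))) \<le> \<bar>x\<bar>" if "x \<in> X" "x \<noteq> 0" for x
    using assms that by (intro Min_le) auto
qed

lemma lam_corr_sum_bounded_away:
  fixes \<nu> :: nat and jbar :: "nat \<Rightarrow> int"
  assumes "inj_on jbar {..<\<nu>}" and "\<And>i. i < \<nu> \<Longrightarrow> jbar i > 0"
  obtains \<alpha> :: real where "\<alpha> > 0"
    and "\<And>l. 0 < (\<Sum>i<\<nu>. \<bar>l i\<bar>) \<Longrightarrow> (\<Sum>i<\<nu>. \<bar>l i\<bar>) \<le> 2 \<Longrightarrow>
           \<alpha> \<le> \<bar>\<Sum>i<\<nu>. lam_corr (jbar i) * real_of_int (l i)\<bar>"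
proof -
  let ?A = "\<lambda>l. \<Sum>i<\<nu>. lam_corr (jbar i) * real_of_int (l i)"
  have "finite {?A l | l. (\<Sum>i<\<nu>. \<bar>l i\<bar>) \<le> 2}"
    by (rule finite_image_l1_bounded) simp_all
  then obtain \<alpha> where \<alpha>: "\<alpha> > 0" "\<And>x. x \<in> {?A l | l. (\<Sum>i<\<nu>. \<bar>l i\<bar>) \<le> 2} \<Longrightarrow> x \<noteq> 0 \<Longrightarrow> \<alpha> \<le> \<bar>x\<bar>"
    using finite_nonzero_abs_lower_bound by blast
  have "inj_on (lam_corr \<circ> jbar) {..<\<nu>}"
    using assms by (intro comp_inj_on inj_on_subset[OF inj_on_lam_corr]) auto
  then have "?A l \<noteq> 0" if "0 < (\<Sum>i<\<nu>. \<bar>l i\<bar>)" "(\<Sum>i<\<nu>. \<bar>l i\<bar>) \<le> 2" for l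
    using weighted_sum_nonzero[of "{..<\<nu>}" "lam_corr \<circ> jbar" l] that assms(2) lam_corr_pos
    by simp
  with \<alpha> show ?thesis
    using that by blast
qed

lemma finite_delta_values:
  "finite {delta \<nu> jbar l j j' | l j j'. (\<Sum>i<\<nu>. \<bar>l i\<bar>) \<le> 2 \<and> \<bar>j\<bar> \<le> K \<and> \<bar>j'\<bar> \<le> K}"
proof (rule finite_subset)
  show "{delta \<nu> jbar l j j' | l j j'. (\<Sum>i<\<nu>. \<bar>l i\<bar>) \<le> 2 \<and> \<bar>j\<bar> \<le> K \<and> \<bar>j'\<bar> \<le> K}
        \<subseteq> (\<Union>(j, j') \<in> {-K..K} \<times> {-K..K}. {delta \<nu> jbar l j j' | l. (\<Sum>i<\<nu>. \<bar>l i\<bar>) \<le> 2})"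
    by (force simp: abs_le_iff)
  show "finite (\<Union>(j, j') \<in> {-K..K} \<times> {-K..K}. {delta \<nu> jbar l j j' | l. (\<Sum>i<\<nu>. \<bar>l i\<bar>) \<le> 2})"
    by (intro finite_UN_I finite_cartesian_product finite_atLeastAtMost_int)
      (auto simp: delta_def intro!: finite_image_l1_bounded sum.cong)
qed

lemma delta_bounded_away_near:
  obtains c :: real where "c > 0"
    and "\<And>l j j'. (\<Sum>i<\<nu>. \<bar>l i\<bar>) \<le> 2 \<Longrightarrow> \<bar>j\<bar> \<le> K \<Longrightarrow> \<bar>j'\<bar> \<le> K \<Longrightarrow>
           delta \<nu> jbar l j j' \<noteq> 0 \<Longrightarrow> c \<le> \<bar>delta \<nu> jbar l j j'\<bar>"
proof -
  obtain c where "c > 0" and c: "\<And>x. x \<in> {delta \<nu> jbar l j j' | l j j'.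
      (\<Sum>i<\<nu>. \<bar>l i\<bar>) \<le> 2 \<and> \<bar>j\<bar> \<le> K \<and> \<bar>j'\<bar> \<le> K} \<Longrightarrow> x \<noteq> 0 \<Longrightarrow> c \<le> \<bar>x\<bar>"
    using finite_nonzero_abs_lower_bound[OF finite_delta_values] by blast
  have "c \<le> \<bar>delta \<nu> jbar l j j'\<bar>" if "(\<Sum>i<\<nu>. \<bar>l i\<bar>) \<le> 2" "\<bar>j\<bar> \<le> K" "\<bar>j'\<bar> \<le> K"
    and "delta \<nu> jbar l j j' \<noteq> 0" for l j j'
    using that by (intro c) blast+
  with \<open>c > 0\<close> show ?thesis
    using that by blast
qed

lemma delta_bounded_away_far:
  fixes \<nu> :: nat and jbar :: "nat \<Rightarrow> int"
  assumes "inj_on jbar {..<\<nu>}" and "\<And>i. i < \<nu> \<Longrightarrow> jbar i > 0"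
  obtains \<alpha> :: real and R :: int where "\<alpha> > 0"
    and "\<And>l j j'. 0 < (\<Sum>i<\<nu>. \<bar>l i\<bar>) \<Longrightarrow> (\<Sum>i<\<nu>. \<bar>l i\<bar>) \<le> 2 \<Longrightarrow>
           (\<Sum>i<\<nu>. jbar i * l i) + j - j' = 0 \<Longrightarrow> R \<le> \<bar>j\<bar> \<Longrightarrow> R \<le> \<bar>j'\<bar> \<Longrightarrow>
           \<alpha> \<le> \<bar>delta \<nu> jbar l j j'\<bar>"
proof -
  obtain \<alpha> where "\<alpha> > 0" and corr_sum: "\<And>l. 0 < (\<Sum>i<\<nu>. \<bar>l i\<bar>) \<Longrightarrow> (\<Sum>i<\<nu>. \<bar>l i\<bar>) \<le> 2 \<Longrightarrow>
      \<alpha> \<le> \<bar>\<Sum>i<\<nu>. lam_corr (jbar i) * real_of_int (l i)\<bar>"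
    using lam_corr_sum_bounded_away[OF assms] by blast
  obtain R where R: "\<And>j. R \<le> \<bar>j\<bar> \<Longrightarrow> \<bar>lam_corr j\<bar> \<le> \<alpha> / 4"
    using lam_corr_eventually_small[of "\<alpha> / 4"] \<open>\<alpha> > 0\<close> by auto
  have "\<alpha> / 2 \<le> \<bar>delta \<nu> jbar l j j'\<bar>"
    if "0 < (\<Sum>i<\<nu>. \<bar>l i\<bar>)" "(\<Sum>i<\<nu>. \<bar>l i\<bar>) \<le> 2" "(\<Sum>i<\<nu>. jbar i * l i) + j - j' = 0"
      and "R \<le> \<bar>j\<bar>" "R \<le> \<bar>j'\<bar>" for l j j'
    unfolding delta_eq_lam_corr[OF that(3)]
    using corr_sum[OF that(1,2)] R[OF that(4)] R[OF that(5)] by linarith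
  with \<open>\<alpha> > 0\<close> show ?thesis
    using that[of "\<alpha> / 2" R] by simp
qed

lemma abs_diff_le_of_momentum:
  fixes jbar l :: "nat \<Rightarrow> int"
  assumes "(\<Sum>i<\<nu>. jbar i * l i) + j - j' = 0" and "(\<Sum>i<\<nu>. \<bar>l i\<bar>) \<le> 2"
  shows "\<bar>j - j'\<bar> \<le> 2 * (\<Sum>i<\<nu>. \<bar>jbar i\<bar>)"
proof -
  have "\<bar>\<Sum>i<\<nu>. jbar i * l i\<bar> \<le> (\<Sum>i<\<nu>. \<bar>jbar i\<bar>) * (\<Sum>i<\<nu>. \<bar>l i\<bar>)"
    by (simp add: abs_sum_mult_le)
  also have "\<dots> \<le> (\<Sum>i<\<nu>. \<bar>jbar i\<bar>) * 2"
    using assms(2) by (intro mult_left_mono) (simp_all add: sum_nonneg)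
  finally show ?thesis
    using assms(1) by linarith
qed

theorem lemmaC7:
  fixes \<nu> :: nat and jbar :: "nat \<Rightarrow> int"
  assumes "inj_on jbar {..<\<nu>}"
    and "\<And>i. i < \<nu> \<Longrightarrow> jbar i > 0"
  shows "\<exists>C>0. \<forall>j j' (l :: nat \<Rightarrow> int).
           j \<in> normS \<nu> jbar \<longrightarrow> j' \<in> normS \<nu> jbar \<longrightarrow> j \<noteq> j' \<longrightarrow>
           0 < (\<Sum>i<\<nu>. \<bar>l i\<bar>) \<longrightarrow> (\<Sum>i<\<nu>. \<bar>l i\<bar>) \<le> 2 \<longrightarrow>
           (\<Sum>i<\<nu>. jbar i * l i) + j - j' = 0 \<longrightarrow>
           delta \<nu> jbar l j j' \<noteq> 0 \<longrightarrow>
           \<bar>delta \<nu> jbar l j j'\<bar> \<ge> C"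
proof -
  obtain \<alpha> R where "\<alpha> > 0" and far: "\<And>l j j'. 0 < (\<Sum>i<\<nu>. \<bar>l i\<bar>) \<Longrightarrow> (\<Sum>i<\<nu>. \<bar>l i\<bar>) \<le> 2 \<Longrightarrow>
      (\<Sum>i<\<nu>. jbar i * l i) + j - j' = 0 \<Longrightarrow> R \<le> \<bar>j\<bar> \<Longrightarrow> R \<le> \<bar>j'\<bar> \<Longrightarrow>
      \<alpha> \<le> \<bar>delta \<nu> jbar l j j'\<bar>"
    using delta_bounded_away_far[OF assms] by blast
  define K where "K = R + 2 * (\<Sum>i<\<nu>. \<bar>jbar i\<bar>)"
  obtain c where "c > 0" and near: "\<And>l j j'. (\<Sum>i<\<nu>. \<bar>l i\<bar>) \<le> 2 \<Longrightarrow> \<bar>j\<bar> \<le> K \<Longrightarrow> \<bar>j'\<bar> \<le> K \<Longrightarrow>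
      delta \<nu> jbar l j j' \<noteq> 0 \<Longrightarrow> c \<le> \<bar>delta \<nu> jbar l j j'\<bar>"
    using delta_bounded_away_near by blast
  have "min \<alpha> c \<le> \<bar>delta \<nu> jbar l j j'\<bar>"
    if l: "0 < (\<Sum>i<\<nu>. \<bar>l i\<bar>)" "(\<Sum>i<\<nu>. \<bar>l i\<bar>) \<le> 2"
      and momentum: "(\<Sum>i<\<nu>. jbar i * l i) + j - j' = 0" and "delta \<nu> jbar l j j' \<noteq> 0" for l j j'
  proof (cases "R \<le> \<bar>j\<bar> \<and> R \<le> \<bar>j'\<bar>")
    case True
    then show ?thesis
      using far[OF l momentum] by (simp add: min.coboundedI1)
  next
    case False
    then have "\<bar>j\<bar> \<le> K" "\<bar>j'\<bar> \<le> K"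
      using abs_diff_le_of_momentum[OF momentum l(2)] unfolding K_def by linarith+
    with near[OF l(2)] \<open>delta \<nu> jbar l j j' \<noteq> 0\<close> show ?thesis
      by (simp add: min.coboundedI2)
  qed
  with \<open>\<alpha> > 0\<close> \<open>c > 0\<close> show ?thesis
    by (intro exI[of _ "min \<alpha> c"]) auto
qed

end
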